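(* Let $n\ge1$, $k\in[n]$, and $f(S)=\min(|S|,k)$ for $S\subseteq[n]$. For every $x\in[0,1]$ and $\mathbf{x}=(x,\dots,x)\in[0,1]^n$, $f^{+}(\mathbf{x})/f^{++}(\mathbf{x})\le 4k/(4k-1)$ (with the convention $0/0=1$). Moreover, when $n$ is even, $k=n/2$ and $x=1/2$, equality $f^{+}(\mathbf{x})/f^{++}(\mathbf{x})=4k/(4k-1)$ holds.
   Context: $[n]=\{1,\dots,n\}$. For $f:2^{[n]}\to\mathbb{R}_+$ and $\mathbf{x}\in[0,1]^n$: the concave closure $f^{+}(\mathbf{x})=\max\sum_{S\subseteq[n]}\theta(S)f(S)$ over $\theta:2^{[n]}\to\mathbb{R}_{\ge0}$ with $\sum_S\theta(S)=1$ and $\sum_{S\ni i}\theta(S)=x_i$ for all $i$; the upper pairwise independent extension $f^{++}(\mathbf{x})$ is the same maximum with the additional constraints $\sum_{S\ni i,j}\theta(S)=x_ix_j$ for all $i<j$. *)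

theory Defs
  imports Complex_Main
begin

definition marg_feasible :: "nat \<Rightarrow> (nat \<Rightarrow> real) \<Rightarrow> (nat set \<Rightarrow> real) \<Rightarrow> bool" where
  "marg_feasible n x \<theta> \<longleftrightarrow>
     (\<forall>S\<in>Pow {1..n}. \<theta> S \<ge> 0) \<and>
     (\<Sum>S\<in>Pow {1..n}. \<theta> S) = 1 \<and>
     (\<forall>i\<in>{1..n}. (\<Sum>S\<in>{S\<in>Pow {1..n}. i \<in> S}. \<theta> S) = x i)"

definition pw_feasible :: "nat \<Rightarrow> (nat \<Rightarrow> real) \<Rightarrow> (nat set \<Rightarrow> real) \<Rightarrow> bool" where
  "pw_feasible n x \<theta> \<longleftrightarrow> marg_feasible n x \<theta> \<and>
     (\<forall>i\<in>{1..n}. \<forall>j\<in>{1..n}. i < j \<longrightarrow>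
        (\<Sum>S\<in>{S\<in>Pow {1..n}. i \<in> S \<and> j \<in> S}. \<theta> S) = x i * x j)"

text \<open>Concave closure f^+ (the maximum is attained; we write it as a supremum).\<close>
definition concave_closure :: "nat \<Rightarrow> (nat set \<Rightarrow> real) \<Rightarrow> (nat \<Rightarrow> real) \<Rightarrow> real" where
  "concave_closure n f x = Sup {(\<Sum>S\<in>Pow {1..n}. \<theta> S * f S) | \<theta>. marg_feasible n x \<theta>}"

definition upper_pw_ext :: "nat \<Rightarrow> (nat set \<Rightarrow> real) \<Rightarrow> (nat \<Rightarrow> real) \<Rightarrow> real" where
  "upper_pw_ext n f x = Sup {(\<Sum>S\<in>Pow {1..n}. \<theta> S * f S) | \<theta>. pw_feasible n x \<theta>}"

definition ratio :: "real \<Rightarrow> real \<Rightarrow> real" where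
  "ratio a b = (if a = 0 \<and> b = 0 then 1 else a / b)"

end

theory Submission
  imports Defs
begin

text \<open>
  Since min (|S|, k) is at most |S| and at most k, and every distribution with marginals x has
  E|S| = n x, we get f^+(x) <= min (n x, k).

  For the lower bound, draw a size m at random and then an m-subset uniformly. The result has
  marginals x and pairwise marginals x^2 whenever m has the first two moments of
  Binomial(n, x). With j = floor ((n - 1) x), one of the triples {j, j+1, n}, {0, j+1, j+2},
  {0, k, n} carries nonnegative Lagrange weights with these moments, according to whether
  k <= j, k >= j + 2 or k = j + 1; the value is then k, n x, or at least
  (1 - 1/(4k)) min (n x, k) respectively. In the degenerate cases x = 0, x = 1 and n = 1 the
  distribution putting mass 1 - x on the empty set and x on [n] is pairwise independent.

  For n = 2k and x = 1/2, pairwise independence forces E|S|^2 = k^2 + k/2, and min (c, k) lies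
  below the parabola through (0, 0), (k, k), (2k, k); hence f^{++} <= k - 1/4, while a uniformly
  random k-subset gives f^+ = k.
\<close>

definition subset_expectation :: "nat \<Rightarrow> (nat set \<Rightarrow> real) \<Rightarrow> (nat set \<Rightarrow> real) \<Rightarrow> real" where
  "subset_expectation n \<theta> g = (\<Sum>S\<in>Pow {1..n}. \<theta> S * g S)"

lemma sum_Pow_by_card:
  fixes h :: "nat \<Rightarrow> 'a::comm_semiring_1"
  assumes "finite A"
  shows "(\<Sum>S\<in>Pow A. h (card S)) = (\<Sum>m\<le>card A. of_nat (card A choose m) * h m)"
proof -
  have "(\<Sum>S\<in>Pow A. h (card S)) = (\<Sum>m\<le>card A. \<Sum>S\<in>{S\<in>Pow A. card S = m}. h (card S))"
    by (rule sum.group[symmetric]) (use assms in \<open>auto intro: card_mono\<close>)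
  also have "\<dots> = (\<Sum>m\<le>card A. of_nat (card {S. S \<subseteq> A \<and> card S = m}) * h m)"
    by (intro sum.cong refl) simp
  finally show ?thesis
    by (simp add: n_subsets[OF assms])
qed

lemma sum_Pow_supersets:
  assumes "B \<subseteq> A"
  shows "(\<Sum>S\<in>{S\<in>Pow A. B \<subseteq> S}. F S) = (\<Sum>T\<in>Pow (A - B). F (B \<union> T))"
  by (rule sum.reindex_bij_witness[where i = "\<lambda>T. B \<union> T" and j = "\<lambda>S. S - B"])
    (use assms in \<open>auto simp: Un_absorb1\<close>)

lemma sum_weighted_card:
  assumes "finite A"
  shows "(\<Sum>S\<in>Pow A. \<theta> S * real (card S)) = (\<Sum>i\<in>A. \<Sum>S\<in>{S\<in>Pow A. i \<in> S}. \<theta> S)"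
proof -
  have "(\<Sum>S\<in>Pow A. \<theta> S * real (card S)) = (\<Sum>S\<in>Pow A. \<Sum>i\<in>A. if i \<in> S then \<theta> S else 0)"
  proof (intro sum.cong refl)
    fix S assume "S \<in> Pow A"
    then have "{i\<in>A. i \<in> S} = S" by auto
    then show "\<theta> S * real (card S) = (\<Sum>i\<in>A. if i \<in> S then \<theta> S else 0)"
      using assms by (simp flip: sum.inter_filter)
  qed
  also have "\<dots> = (\<Sum>i\<in>A. \<Sum>S\<in>Pow A. if i \<in> S then \<theta> S else 0)"
    by (rule sum.swap)
  also have "\<dots> = (\<Sum>i\<in>A. \<Sum>S\<in>{S\<in>Pow A. i \<in> S}. \<theta> S)"
    using assms by (simp flip: sum.inter_filter)
  finally show ?thesis .
qed

lemma sum_weighted_card_sq: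
  assumes "finite A"
  shows "(\<Sum>S\<in>Pow A. \<theta> S * real (card S)^2) = (\<Sum>i\<in>A. \<Sum>j\<in>A. \<Sum>S\<in>{S\<in>Pow A. i \<in> S \<and> j \<in> S}. \<theta> S)"
proof -
  have "(\<Sum>S\<in>Pow A. \<theta> S * real (card S)^2) = (\<Sum>S\<in>Pow A. \<Sum>i\<in>A. \<Sum>j\<in>A. if i \<in> S \<and> j \<in> S then \<theta> S else 0)"
  proof (intro sum.cong refl)
    fix S assume "S \<in> Pow A"
    then have "{i\<in>A. i \<in> S} = S" by auto
    then have "real (card S) = (\<Sum>i\<in>A. if i \<in> S then 1 else 0)"
      using assms by (simp flip: sum.inter_filter)
    then show "\<theta> S * real (card S)^2 = (\<Sum>i\<in>A. \<Sum>j\<in>A. if i \<in> S \<and> j \<in> S then \<theta> S else 0)"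
      by (simp add: power2_eq_square sum_product sum_distrib_left if_distrib cong: if_cong)
        (auto intro!: sum.cong)
  qed
  also have "\<dots> = (\<Sum>i\<in>A. \<Sum>j\<in>A. \<Sum>S\<in>Pow A. if i \<in> S \<and> j \<in> S then \<theta> S else 0)"
    by (simp only: sum.swap[of _ "Pow A"])
  also have "\<dots> = (\<Sum>i\<in>A. \<Sum>j\<in>A. \<Sum>S\<in>{S\<in>Pow A. i \<in> S \<and> j \<in> S}. \<theta> S)"
    using assms by (simp flip: sum.inter_filter)
  finally show ?thesis .
qed

lemma marg_feasible_expected_card:
  assumes "marg_feasible n x \<theta>"
  shows "subset_expectation n \<theta> (\<lambda>S. real (card S)) = sum x {1..n}"
  using assms unfolding subset_expectation_def marg_feasible_def by (simp add: sum_weighted_card)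

lemma pw_feasible_expected_card_sq:
  assumes "pw_feasible n (\<lambda>_. x) \<theta>"
  shows "subset_expectation n \<theta> (\<lambda>S. real (card S)^2) = real n * x + real n * (real n - 1) * x^2"
proof -
  have joint: "(\<Sum>S\<in>{S\<in>Pow {1..n}. i \<in> S \<and> j \<in> S}. \<theta> S) = x^2 + (if i = j then x - x^2 else 0)"
    if "i \<in> {1..n}" "j \<in> {1..n}" for i j
  proof (cases i j rule: linorder_cases)
    case less
    then show ?thesis using assms that unfolding pw_feasible_def by (simp add: power2_eq_square)
  next
    case equal
    then show ?thesis using assms that unfolding pw_feasible_def marg_feasible_def by simp
  next
    case greater
    have "{S\<in>Pow {1..n}. i \<in> S \<and> j \<in> S} = {S\<in>Pow {1..n}. j \<in> S \<and> i \<in> S}" by auto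
    then show ?thesis using greater assms that unfolding pw_feasible_def by (simp add: power2_eq_square)
  qed
  have "subset_expectation n \<theta> (\<lambda>S. real (card S)^2) = (\<Sum>i\<in>{1..n}. \<Sum>j\<in>{1..n}. x^2 + (if i = j then x - x^2 else 0))"
    unfolding subset_expectation_def sum_weighted_card_sq[OF finite_atLeastAtMost]
    by (intro sum.cong[OF refl] joint)
  also have "\<dots> = real n * x + real n * (real n - 1) * x^2"
    by (simp add: sum.distrib algebra_simps power2_eq_square)
  finally show ?thesis .
qed

lemma subset_expectation_mono:
  assumes "\<forall>S\<in>Pow {1..n}. 0 \<le> \<theta> S" and "\<And>S. S \<subseteq> {1..n} \<Longrightarrow> g S \<le> h S"
  shows "subset_expectation n \<theta> g \<le> subset_expectation n \<theta> h"
  unfolding subset_expectation_def using assms by (intro sum_mono mult_left_mono) auto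

lemma marg_feasible_expectation_const:
  assumes "marg_feasible n x \<theta>"
  shows "subset_expectation n \<theta> (\<lambda>_. c) = c"
  using assms unfolding marg_feasible_def subset_expectation_def by (simp flip: sum_distrib_right)

lemma expectation_min_card_le:
  assumes "marg_feasible n x \<theta>"
  shows "subset_expectation n \<theta> (\<lambda>S. real (min (card S) k)) \<le> min (sum x {1..n}) (real k)"
proof -
  have nonneg: "\<forall>S\<in>Pow {1..n}. 0 \<le> \<theta> S"
    using assms unfolding marg_feasible_def by simp
  have "subset_expectation n \<theta> (\<lambda>S. real (min (card S) k)) \<le> subset_expectation n \<theta> (\<lambda>S. real (card S))"
    and "subset_expectation n \<theta> (\<lambda>S. real (min (card S) k)) \<le> subset_expectation n \<theta> (\<lambda>_. real k)"
    by (rule subset_expectation_mono[OF nonneg]; simp)+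
  then show ?thesis
    unfolding marg_feasible_expected_card[OF assms] marg_feasible_expectation_const[OF assms] by simp
qed

lemma bdd_above_marg_feasible_expectations:
  "bdd_above {subset_expectation n \<theta> f | \<theta>. marg_feasible n x \<theta>}"
proof (rule bdd_aboveI)
  fix v assume "v \<in> {subset_expectation n \<theta> f | \<theta>. marg_feasible n x \<theta>}"
  then obtain \<theta> where \<theta>: "marg_feasible n x \<theta>" and v: "v = subset_expectation n \<theta> f" by blast
  have "\<theta> S * f S \<le> \<bar>f S\<bar>" if "S \<in> Pow {1..n}" for S
  proof -
    have "0 \<le> \<theta> S" "(\<Sum>S\<in>Pow {1..n}. \<theta> S) = 1" "\<forall>S\<in>Pow {1..n}. 0 \<le> \<theta> S"
      using \<theta> that unfolding marg_feasible_def by auto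
    then have "\<theta> S \<le> 1"
      using member_le_sum[OF that, of \<theta>] by simp
    with \<open>0 \<le> \<theta> S\<close> have "\<theta> S * f S \<le> \<theta> S * \<bar>f S\<bar>" "\<theta> S * \<bar>f S\<bar> \<le> \<bar>f S\<bar>"
      by (simp_all add: mult_left_mono mult_left_le_one_le)
    then show ?thesis by linarith
  qed
  then show "v \<le> (\<Sum>S\<in>Pow {1..n}. \<bar>f S\<bar>)"
    unfolding v subset_expectation_def by (rule sum_mono)
qed

lemma concave_closure_upper:
  assumes "marg_feasible n x \<theta>"
  shows "subset_expectation n \<theta> f \<le> concave_closure n f x"
  unfolding concave_closure_def subset_expectation_def[symmetric]
  by (rule cSup_upper) (use assms bdd_above_marg_feasible_expectations in auto)

lemma concave_closure_least:
  assumes "marg_feasible n x \<theta>\<^sub>0" and "\<And>\<theta>. marg_feasible n x \<theta> \<Longrightarrow> subset_expectation n \<theta> f \<le> B"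
  shows "concave_closure n f x \<le> B"
  unfolding concave_closure_def subset_expectation_def[symmetric]
  by (rule cSup_least) (use assms in auto)

lemma upper_pw_ext_upper:
  assumes "pw_feasible n x \<theta>"
  shows "subset_expectation n \<theta> f \<le> upper_pw_ext n f x"
proof -
  have "bdd_above {subset_expectation n \<theta> f | \<theta>. pw_feasible n x \<theta>}"
    by (rule bdd_above_mono[OF bdd_above_marg_feasible_expectations]) (auto simp: pw_feasible_def)
  with assms show ?thesis
    unfolding upper_pw_ext_def subset_expectation_def[symmetric] by (intro cSup_upper) auto
qed

lemma upper_pw_ext_least:
  assumes "pw_feasible n x \<theta>\<^sub>0" and "\<And>\<theta>. pw_feasible n x \<theta> \<Longrightarrow> subset_expectation n \<theta> f \<le> B"
  shows "upper_pw_ext n f x \<le> B"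
  unfolding upper_pw_ext_def subset_expectation_def[symmetric]
  by (rule cSup_least) (use assms in auto)

lemma upper_pw_ext_le_concave_closure:
  assumes "pw_feasible n x \<theta>\<^sub>0"
  shows "upper_pw_ext n f x \<le> concave_closure n f x"
  using assms by (intro upper_pw_ext_least concave_closure_upper) (auto simp: pw_feasible_def)

lemma ratio_le_inverse:
  assumes "0 < c" "c \<le> 1" "0 \<le> U" "c * U \<le> b" "b \<le> a" "a \<le> U"
  shows "ratio a b \<le> 1 / c"
proof (cases "U = 0")
  case True
  with assms have "a = 0" "b = 0" by auto
  with assms show ?thesis by (simp add: ratio_def)
next
  case False
  with assms have "0 < c * U" by simp
  with assms have "0 < b" by linarith
  have "a / b \<le> U / (c * U)"
    using \<open>0 < b\<close> \<open>0 < c * U\<close> assms by (intro frac_le) auto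
  with \<open>0 < b\<close> False show ?thesis by (simp add: ratio_def)
qed

section \<open>Distributions that are uniform given the size\<close>

definition size_uniform :: "nat \<Rightarrow> (nat \<Rightarrow> real) \<Rightarrow> nat set \<Rightarrow> real" where
  "size_uniform n p S = p (card S) / real (n choose card S)"

lemma size_uniform_expectation:
  "subset_expectation n (size_uniform n p) (\<lambda>S. g (card S)) = (\<Sum>m\<le>n. p m * g m)"
proof -
  have "subset_expectation n (size_uniform n p) (\<lambda>S. g (card S))
      = (\<Sum>S\<in>Pow {1..n}. (\<lambda>m. p m / real (n choose m) * g m) (card S))"
    unfolding subset_expectation_def size_uniform_def by simp
  also have "\<dots> = (\<Sum>m\<le>n. real (n choose m) * (p m / real (n choose m) * g m))"
    using sum_Pow_by_card[of "{1..n}" "\<lambda>m. p m / real (n choose m) * g m"] by simp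
  also have "\<dots> = (\<Sum>m\<le>n. p m * g m)"
    by (intro sum.cong) auto
  finally show ?thesis .
qed

lemma size_uniform_superset_mass:
  assumes "B \<subseteq> {1..n}"
  shows "(\<Sum>S\<in>{S\<in>Pow {1..n}. B \<subseteq> S}. size_uniform n p S)
       = (\<Sum>m\<le>n. p m * real (m choose card B)) / real (n choose card B)"
proof -
  define b where "b = card B"
  have "finite B"
    using assms finite_subset by blast
  have "b \<le> n"
    using card_mono[OF _ assms] unfolding b_def by simp
  have "(\<Sum>S\<in>{S\<in>Pow {1..n}. B \<subseteq> S}. size_uniform n p S)
      = (\<Sum>T\<in>Pow ({1..n} - B). (\<lambda>t. p (b + t) / real (n choose (b + t))) (card T))"
    unfolding sum_Pow_supersets[OF assms] size_uniform_def
  proof (intro sum.cong refl)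
    fix T assume "T \<in> Pow ({1..n} - B)"
    then have "finite T" "B \<inter> T = {}"
      by (auto intro: finite_subset)
    with \<open>finite B\<close> show "p (card (B \<union> T)) / real (n choose card (B \<union> T))
        = p (b + card T) / real (n choose (b + card T))"
      by (simp add: card_Un_disjoint b_def)
  qed
  also have "\<dots> = (\<Sum>t\<le>n - b. real (n - b choose t) * (p (b + t) / real (n choose (b + t))))"
    using sum_Pow_by_card[of "{1..n} - B" "\<lambda>t. p (b + t) / real (n choose (b + t))"]
      card_Diff_subset[OF \<open>finite B\<close> assms] b_def by simp
  also have "\<dots> = (\<Sum>t\<le>n - b. p (b + t) * real (b + t choose b) / real (n choose b))"
  proof (intro sum.cong refl)
    fix t assume "t \<in> {..n - b}"
    then have "real (n choose (b + t)) * real (b + t choose b) = real (n choose b) * real (n - b choose t)"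
      "0 < n choose (b + t)" "0 < n choose b"
      using choose_mult[of b "b + t" n] \<open>b \<le> n\<close> by (simp_all flip: of_nat_mult)
    then show "real (n - b choose t) * (p (b + t) / real (n choose (b + t)))
             = p (b + t) * real (b + t choose b) / real (n choose b)"
      by (simp add: field_simps)
  qed
  also have "\<dots> = (\<Sum>m\<in>{b..n}. p m * real (m choose b)) / real (n choose b)"
    unfolding sum_divide_distrib
    by (rule sum.reindex_bij_witness[where i = "\<lambda>m. m - b" and j = "\<lambda>t. b + t"])
      (use \<open>b \<le> n\<close> in auto)
  also have "\<dots> = (\<Sum>m\<le>n. p m * real (m choose b)) / real (n choose b)"
    by (subst sum.mono_neutral_left[of "{..n}" "{b..n}"]) auto
  finally show ?thesis
    unfolding b_def .
qed

lemma real_choose_two: "real (m choose 2) = real m * (real m - 1) / 2"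
  by (induction m) (simp_all add: numeral_2_eq_2 field_simps)

lemma size_uniform_marg_feasible:
  assumes nonneg: "\<forall>m\<le>n. 0 \<le> p m" and total: "(\<Sum>m\<le>n. p m) = 1"
    and mean: "(\<Sum>m\<le>n. p m * real m) = real n * x"
  shows "marg_feasible n (\<lambda>_. x) (size_uniform n p)"
  unfolding marg_feasible_def
proof (intro conjI ballI)
  fix S assume "S \<in> Pow {1..n}"
  then have "card S \<le> n"
    using card_mono[of "{1..n}" S] by auto
  with nonneg show "0 \<le> size_uniform n p S"
    unfolding size_uniform_def by simp
next
  show "(\<Sum>S\<in>Pow {1..n}. size_uniform n p S) = 1"
    using size_uniform_expectation[of n p "\<lambda>_. 1"] total unfolding subset_expectation_def by simp
next
  fix i assume "i \<in> {1..n}"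
  then have "{S\<in>Pow {1..n}. i \<in> S} = {S\<in>Pow {1..n}. {i} \<subseteq> S}" "{i} \<subseteq> {1..n}" "n \<noteq> 0"
    by auto
  then show "(\<Sum>S\<in>{S\<in>Pow {1..n}. i \<in> S}. size_uniform n p S) = x"
    using size_uniform_superset_mass[of "{i}" n p] mean by simp
qed

lemma size_uniform_pw_feasible:
  assumes nonneg: "\<forall>m\<le>n. 0 \<le> p m" and total: "(\<Sum>m\<le>n. p m) = 1"
    and mean: "(\<Sum>m\<le>n. p m * real m) = real n * x"
    and second: "(\<Sum>m\<le>n. p m * real m ^ 2) = real n * x + real n * (real n - 1) * x^2"
  shows "pw_feasible n (\<lambda>_. x) (size_uniform n p)"
  unfolding pw_feasible_def
proof (intro conjI ballI impI)
  show "marg_feasible n (\<lambda>_. x) (size_uniform n p)"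
    using nonneg total mean by (rule size_uniform_marg_feasible)
next
  fix i j assume "i \<in> {1..n}" "j \<in> {1..n}" "i < j"
  then have "{S\<in>Pow {1..n}. i \<in> S \<and> j \<in> S} = {S\<in>Pow {1..n}. {i, j} \<subseteq> S}" "{i, j} \<subseteq> {1..n}"
    "card {i, j} = 2" "real n * (real n - 1) \<noteq> 0"
    by auto
  moreover have "(\<Sum>m\<le>n. p m * (real m * (real m - 1))) = real n * (real n - 1) * x^2"
    using mean second by (simp add: algebra_simps power2_eq_square sum_subtractf)
  ultimately show "(\<Sum>S\<in>{S\<in>Pow {1..n}. i \<in> S \<and> j \<in> S}. size_uniform n p S) = x * x"
    using size_uniform_superset_mass[of "{i, j}" n p]
    by (simp add: real_choose_two sum_divide_distrib[symmetric] power2_eq_square)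
qed

lemma three_point_pw_feasible:
  assumes "a \<le> n" "b \<le> n" "c \<le> n" "0 \<le> \<alpha>" "0 \<le> \<beta>" "0 \<le> \<gamma>" "\<alpha> + \<beta> + \<gamma> = 1"
    and "\<alpha> * real a + \<beta> * real b + \<gamma> * real c = real n * x"
    and "\<alpha> * real a ^ 2 + \<beta> * real b ^ 2 + \<gamma> * real c ^ 2 = real n * x + real n * (real n - 1) * x^2"
  shows "\<exists>\<theta>. pw_feasible n (\<lambda>_. x) \<theta> \<and>
    subset_expectation n \<theta> (\<lambda>S. g (card S)) = \<alpha> * g a + \<beta> * g b + \<gamma> * g c"
proof -
  define p where "p m = \<alpha> * of_bool (m = a) + \<beta> * of_bool (m = b) + \<gamma> * of_bool (m = c)" for m
  have "{..n} \<inter> {d} = {d}" if "d \<le> n" for d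
    using that by auto
  then have sum_p: "(\<Sum>m\<le>n. p m * h m) = \<alpha> * h a + \<beta> * h b + \<gamma> * h c" for h :: "nat \<Rightarrow> real"
    unfolding p_def using assms(1-3) by (simp add: sum.distrib ring_distribs mult.assoc flip: sum_distrib_left)
  have "pw_feasible n (\<lambda>_. x) (size_uniform n p)"
    using assms sum_p[of "\<lambda>_. 1"] sum_p[of real] sum_p[of "\<lambda>m. real m ^ 2"]
    by (intro size_uniform_pw_feasible) (auto simp: p_def)
  moreover have "subset_expectation n (size_uniform n p) (\<lambda>S. g (card S)) = \<alpha> * g a + \<beta> * g b + \<gamma> * g c"
    by (simp add: size_uniform_expectation sum_p)
  ultimately show ?thesis
    by blast
qed

lemma all_or_nothing_pw_feasible:
  assumes "0 \<le> x" "x \<le> 1" "x = 0 \<or> x = 1 \<or> n \<le> 1"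
  shows "\<exists>\<theta>. pw_feasible n (\<lambda>_. x) \<theta> \<and> subset_expectation n \<theta> (\<lambda>S. g (card S)) = (1 - x) * g 0 + x * g n"
proof -
  have "real n * (real n - 1) * x * (1 - x) = 0"
    using assms(3) by (auto simp: le_Suc_eq)
  then show ?thesis
    using three_point_pw_feasible[of 0 n n n "1 - x" x 0 x g] assms(1,2)
    by (simp add: algebra_simps power2_eq_square)
qed

section \<open>Pairwise independent distributions of large value\<close>

text \<open>E[(m - u) (m - w)] for m distributed as Binomial(n, x), i.e. with mean n x and variance
  n x (1 - x).\<close>

definition binomial_cross_moment :: "nat \<Rightarrow> real \<Rightarrow> real \<Rightarrow> real \<Rightarrow> real" where
  "binomial_cross_moment n x u w = (real n * x - u) * (real n * x - w) + real n * x * (1 - x)"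

text \<open>Lagrange interpolation at a, b, c: these weights are the unique distribution on {a, b, c}
  with the first two moments of Binomial(n, x).\<close>

lemma interpolation_weights_moments:
  fixes a b c x :: real and n :: nat
  assumes "a \<noteq> b" "a \<noteq> c" "b \<noteq> c"
  defines "\<alpha> \<equiv> binomial_cross_moment n x b c / ((a - b) * (a - c))"
    and "\<beta> \<equiv> binomial_cross_moment n x a c / ((b - a) * (b - c))"
    and "\<gamma> \<equiv> binomial_cross_moment n x a b / ((c - a) * (c - b))"
  shows "\<alpha> + \<beta> + \<gamma> = 1"
    and "\<alpha> * a + \<beta> * b + \<gamma> * c = real n * x"
    and "\<alpha> * a^2 + \<beta> * b^2 + \<gamma> * c^2 = real n * x + real n * (real n - 1) * x^2"
proof -
  have "a - b \<noteq> 0" "a - c \<noteq> 0" "b - a \<noteq> 0" "b - c \<noteq> 0" "c - a \<noteq> 0" "c - b \<noteq> 0"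
    using assms(1-3) by auto
  note nonzero = this mult_eq_0_iff
  show "\<alpha> + \<beta> + \<gamma> = 1"
    unfolding \<alpha>_def \<beta>_def \<gamma>_def binomial_cross_moment_def using nonzero
    by (simp add: divide_simps) (simp add: algebra_simps)
  show "\<alpha> * a + \<beta> * b + \<gamma> * c = real n * x"
    unfolding \<alpha>_def \<beta>_def \<gamma>_def binomial_cross_moment_def using nonzero
    by (simp add: divide_simps) (simp add: algebra_simps)
  show "\<alpha> * a^2 + \<beta> * b^2 + \<gamma> * c^2 = real n * x + real n * (real n - 1) * x^2"
    unfolding \<alpha>_def \<beta>_def \<gamma>_def binomial_cross_moment_def using nonzero
    by (simp add: divide_simps) (simp add: algebra_simps power2_eq_square)
qed

lemma interpolated_three_point_pw_feasible:
  fixes a b c :: nat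
  assumes "a < b" "b < c" "c \<le> n"
    and "0 \<le> binomial_cross_moment n x b c" "binomial_cross_moment n x a c \<le> 0"
    and "0 \<le> binomial_cross_moment n x a b"
  shows "\<exists>\<theta> \<alpha> \<beta> \<gamma>. pw_feasible n (\<lambda>_. x) \<theta> \<and>
    subset_expectation n \<theta> (\<lambda>S. g (card S)) = \<alpha> * g a + \<beta> * g b + \<gamma> * g c \<and>
    \<alpha> + \<beta> + \<gamma> = 1 \<and> \<alpha> * real a + \<beta> * real b + \<gamma> * real c = real n * x \<and>
    \<alpha> * ((real a - real b) * (real a - real c)) = binomial_cross_moment n x b c"
proof -
  define \<alpha> where "\<alpha> = binomial_cross_moment n x b c / ((real a - real b) * (real a - real c))"
  define \<beta> where "\<beta> = binomial_cross_moment n x a c / ((real b - real a) * (real b - real c))"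
  define \<gamma> where "\<gamma> = binomial_cross_moment n x a b / ((real c - real a) * (real c - real b))"
  have "0 < (real a - real b) * (real a - real c)" "(real b - real a) * (real b - real c) < 0"
    "0 < (real c - real a) * (real c - real b)"
    using assms(1,2) by (simp_all add: mult_neg_neg mult_pos_neg)
  then have nonneg: "0 \<le> \<alpha>" "0 \<le> \<beta>" "0 \<le> \<gamma>"
    and \<alpha>: "\<alpha> * ((real a - real b) * (real a - real c)) = binomial_cross_moment n x b c"
    using assms(1,2,4-6) unfolding \<alpha>_def \<beta>_def \<gamma>_def by (simp_all add: divide_nonpos_neg)
  have "real a \<noteq> real b" "real a \<noteq> real c" "real b \<noteq> real c"
    using assms(1,2) by simp_all
  note moments = interpolation_weights_moments[OF this, of n x, folded \<alpha>_def \<beta>_def \<gamma>_def]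
  obtain \<theta> where "pw_feasible n (\<lambda>_. x) \<theta>"
    "subset_expectation n \<theta> (\<lambda>S. g (card S)) = \<alpha> * g a + \<beta> * g b + \<gamma> * g c"
    using three_point_pw_feasible[OF _ _ _ nonneg moments] assms(1-3) by auto
  with moments(1,2) \<alpha> show ?thesis
    by blast
qed

lemma binomial_cross_moment_top:
  "binomial_cross_moment n x u (real n) = real n * (1 - x) * (u - (real n - 1) * x)"
  unfolding binomial_cross_moment_def by (simp add: algebra_simps)

lemma binomial_cross_moment_zero:
  "binomial_cross_moment n x 0 w = real n * x * ((real n - 1) * x - (w - 1))"
  unfolding binomial_cross_moment_def by (simp add: algebra_simps)

lemma binomial_cross_moment_consecutive_nonneg:
  assumes "a < n"
  shows "0 \<le> binomial_cross_moment n x (real a) (real (Suc a))"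
proof -
  define u where "u = real n * x - real a"
  have "real n * binomial_cross_moment n x (real a) (real (Suc a))
      = (real n - real (Suc a)) * (real a + u^2) + real a * (1 - u)^2"
    unfolding binomial_cross_moment_def u_def by (simp add: algebra_simps power2_eq_square)
  also have "0 \<le> \<dots>"
    using assms by (intro add_nonneg_nonneg mult_nonneg_nonneg) auto
  finally show ?thesis
    using assms by (simp add: zero_le_mult_iff)
qed

lemma saturated_pw_feasible:
  assumes "2 \<le> n" "0 < x" "x < 1"
    and j: "real j \<le> (real n - 1) * x" "(real n - 1) * x < real j + 1"
    and "k \<le> j"
  shows "\<exists>\<theta>. pw_feasible n (\<lambda>_. x) \<theta> \<and> subset_expectation n \<theta> (\<lambda>S. real (min (card S) k)) = real k"
proof -
  have "(real n - 1) * x < real n - 1"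
    using assms(1-3) by simp
  with j have "Suc j < n"
    by linarith
  have "0 \<le> binomial_cross_moment n x (real (Suc j)) (real n)"
    unfolding binomial_cross_moment_top using assms(1,3) j(2) by (intro mult_nonneg_nonneg) auto
  moreover have "binomial_cross_moment n x (real j) (real n) \<le> 0"
    unfolding binomial_cross_moment_top using assms(1,3) j(1) by (intro mult_nonneg_nonpos) auto
  moreover have "0 \<le> binomial_cross_moment n x (real j) (real (Suc j))"
    using \<open>Suc j < n\<close> by (intro binomial_cross_moment_consecutive_nonneg) simp
  ultimately obtain \<theta> \<alpha> \<beta> \<gamma> where "pw_feasible n (\<lambda>_. x) \<theta>" "\<alpha> + \<beta> + \<gamma> = 1"
    "subset_expectation n \<theta> (\<lambda>S. real (min (card S) k))
      = \<alpha> * real (min j k) + \<beta> * real (min (Suc j) k) + \<gamma> * real (min n k)"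
    using interpolated_three_point_pw_feasible[OF lessI \<open>Suc j < n\<close> order_refl, of x "\<lambda>m. real (min m k)"]
    by blast
  moreover have "min j k = k" "min (Suc j) k = k" "min n k = k"
    using \<open>k \<le> j\<close> \<open>Suc j < n\<close> by auto
  ultimately show ?thesis
    by (metis distrib_right mult_1)
qed

lemma unsaturated_pw_feasible:
  assumes "0 \<le> x" and j: "real j \<le> (real n - 1) * x" "(real n - 1) * x < real j + 1"
    and "j + 2 \<le> k" "k \<le> n"
  shows "\<exists>\<theta>. pw_feasible n (\<lambda>_. x) \<theta> \<and> subset_expectation n \<theta> (\<lambda>S. real (min (card S) k)) = real n * x"
proof -
  have "Suc (Suc j) \<le> n"
    using assms(4,5) by simp
  have "0 \<le> binomial_cross_moment n x (real (Suc j)) (real (Suc (Suc j)))"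
    using \<open>Suc (Suc j) \<le> n\<close> by (intro binomial_cross_moment_consecutive_nonneg) simp
  moreover have "binomial_cross_moment n x (real 0) (real (Suc (Suc j))) \<le> 0"
    unfolding of_nat_0 binomial_cross_moment_zero using assms(1) j(2) by (intro mult_nonneg_nonpos) auto
  moreover have "0 \<le> binomial_cross_moment n x (real 0) (real (Suc j))"
    unfolding of_nat_0 binomial_cross_moment_zero using assms(1) j(1) by (intro mult_nonneg_nonneg) auto
  ultimately obtain \<theta> \<alpha> \<beta> \<gamma> where "pw_feasible n (\<lambda>_. x) \<theta>"
    "\<alpha> * real 0 + \<beta> * real (Suc j) + \<gamma> * real (Suc (Suc j)) = real n * x"
    "subset_expectation n \<theta> (\<lambda>S. real (min (card S) k))
      = \<alpha> * real (min 0 k) + \<beta> * real (min (Suc j) k) + \<gamma> * real (min (Suc (Suc j)) k)"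
    using interpolated_three_point_pw_feasible[OF zero_less_Suc lessI \<open>Suc (Suc j) \<le> n\<close>,
        of x "\<lambda>m. real (min m k)"]
    by blast
  moreover have "min (Suc j) k = Suc j" "min (Suc (Suc j)) k = Suc (Suc j)"
    using assms(4) by auto
  ultimately show ?thesis
    by auto
qed

lemma critical_value_bound:
  fixes k s x :: real
  assumes "1 \<le> k" "0 \<le> x" "x \<le> 1" "0 \<le> s" "s \<le> 1"
  shows "(1 - 1 / (4 * k)) * min (k - s + x) k \<le> k - (1 - x) * s"
proof (cases "x \<le> s")
  case True
  \<comment> \<open>linear in x; true at x = 0, and at x = s because 4 s (1 - s) \<le> 1\<close>
  have "4 * k * x * (1 - s) \<le> k - s + x"
  proof (cases "0 \<le> 1 - 4 * k * (1 - s)")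
    case True
    then have "0 \<le> x * (1 - 4 * k * (1 - s))"
      using assms by simp
    then show ?thesis
      using assms by (simp add: algebra_simps)
  next
    case False
    then have "0 \<le> (s - x) * (4 * k * (1 - s) - 1)"
      using \<open>x \<le> s\<close> by simp
    moreover have "0 \<le> k * (1 - 2 * s)^2"
      using assms by simp
    ultimately show ?thesis
      by (simp add: algebra_simps power2_eq_square)
  qed
  then have "x * (1 - s) \<le> (k - s + x) / (4 * k)"
    using assms by (simp add: field_simps)
  with True show ?thesis
    by (simp add: algebra_simps)
next
  case False
  have "(1 - x) * s \<le> (1 - s) * s"
    using False assms by (simp add: mult_right_mono)
  also have "\<dots> \<le> 1 / 4"
    using zero_le_power2[of "s - 1/2"] by (simp add: power2_eq_square algebra_simps)
  finally show ?thesis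
    using False assms by (simp add: algebra_simps)
qed

lemma critical_pw_feasible:
  assumes "2 \<le> n" "0 < x" "x < 1"
    and j: "real j \<le> (real n - 1) * x" "(real n - 1) * x < real j + 1"
    and "k = Suc j"
  shows "\<exists>\<theta>. pw_feasible n (\<lambda>_. x) \<theta> \<and>
    (1 - 1 / (4 * real k)) * min (real n * x) (real k) \<le> subset_expectation n \<theta> (\<lambda>S. real (min (card S) k))"
proof -
  have "(real n - 1) * x < real n - 1"
    using assms(1-3) by simp
  with j have "k < n"
    using assms(6) by linarith
  have "0 < k"
    using assms(6) by simp
  have "0 \<le> binomial_cross_moment n x (real k) (real n)"
    unfolding binomial_cross_moment_top using assms(1,3,6) j(2) by (intro mult_nonneg_nonneg) auto
  moreover have "binomial_cross_moment n x (real 0) (real n) \<le> 0"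
    unfolding of_nat_0 binomial_cross_moment_zero using assms(1-3) by (intro mult_nonneg_nonpos) auto
  moreover have "0 \<le> binomial_cross_moment n x (real 0) (real k)"
    unfolding of_nat_0 binomial_cross_moment_zero using assms(2,6) j(1) by (intro mult_nonneg_nonneg) auto
  ultimately obtain \<theta> \<alpha> \<beta> \<gamma> where "pw_feasible n (\<lambda>_. x) \<theta>" and total: "\<alpha> + \<beta> + \<gamma> = 1"
    and expectation: "subset_expectation n \<theta> (\<lambda>S. real (min (card S) k))
      = \<alpha> * real (min 0 k) + \<beta> * real (min k k) + \<gamma> * real (min n k)"
    and \<alpha>: "\<alpha> * ((real 0 - real k) * (real 0 - real n)) = binomial_cross_moment n x (real k) (real n)"
    using interpolated_three_point_pw_feasible[OF \<open>0 < k\<close> \<open>k < n\<close> order_refl, of x "\<lambda>m. real (min m k)"]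
    by blast
  have "real n * (\<alpha> * real k) = real n * ((1 - x) * (real k - (real n - 1) * x))"
    using \<alpha> unfolding binomial_cross_moment_top by (simp add: algebra_simps)
  then have "\<alpha> * real k = (1 - x) * (real k - (real n - 1) * x)"
    using \<open>k < n\<close> by simp
  moreover have "subset_expectation n \<theta> (\<lambda>S. real (min (card S) k)) = (\<beta> + \<gamma>) * real k"
    using expectation \<open>k < n\<close> by (simp add: algebra_simps)
  moreover have "\<beta> + \<gamma> = 1 - \<alpha>"
    using total by simp
  moreover have "(1 - 1 / (4 * real k)) * min (real n * x) (real k)
      \<le> real k - (1 - x) * (real k - (real n - 1) * x)"
    using critical_value_bound[of "real k" x "real k - (real n - 1) * x"] assms j
    by (simp add: algebra_simps)
  ultimately show ?thesis
    using \<open>pw_feasible n (\<lambda>_. x) \<theta>\<close> by (auto simp: algebra_simps)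
qed

lemma pw_feasible_near_min:
  assumes "1 \<le> k" "k \<le> n" "0 \<le> x" "x \<le> 1"
  shows "\<exists>\<theta>. pw_feasible n (\<lambda>_. x) \<theta> \<and>
    (1 - 1 / (4 * real k)) * min (real n * x) (real k) \<le> subset_expectation n \<theta> (\<lambda>S. real (min (card S) k))"
proof -
  have below_min: "(1 - 1 / (4 * real k)) * min (real n * x) (real k) \<le> min (real n * x) (real k)"
    using assms(1,3) by (intro mult_left_le_one_le) auto
  consider "x = 0 \<or> x = 1 \<or> n \<le> 1" | "2 \<le> n" "0 < x" "x < 1"
    using assms(3,4) by linarith
  then show ?thesis
  proof cases
    case 1
    then obtain \<theta> where "pw_feasible n (\<lambda>_. x) \<theta>"
      "subset_expectation n \<theta> (\<lambda>S. real (min (card S) k)) = x * real (min n k)"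
      using all_or_nothing_pw_feasible[of x n "\<lambda>m. real (min m k)"] assms(3,4) by auto
    moreover have "min (real n * x) (real k) \<le> x * real (min n k)"
      using 1 assms by (auto simp: le_Suc_eq)
    ultimately show ?thesis
      using below_min by force
  next
    case 2
    define j where "j = nat \<lfloor>(real n - 1) * x\<rfloor>"
    have "0 \<le> (real n - 1) * x"
      using 2 by simp
    then have j: "real j \<le> (real n - 1) * x" "(real n - 1) * x < real j + 1"
      unfolding j_def by linarith+
    consider "k \<le> j" | "k = Suc j" | "j + 2 \<le> k"
      by linarith
    then show ?thesis
    proof cases
      case 1
      then obtain \<theta> where "pw_feasible n (\<lambda>_. x) \<theta>"
        "subset_expectation n \<theta> (\<lambda>S. real (min (card S) k)) = real k"
        using saturated_pw_feasible[OF 2 j] by blast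
      with below_min show ?thesis
        by force
    next
      case 3
      then obtain \<theta> where "pw_feasible n (\<lambda>_. x) \<theta>"
        "subset_expectation n \<theta> (\<lambda>S. real (min (card S) k)) = real n * x"
        using unsaturated_pw_feasible[OF _ j _ assms(2)] assms(3) by blast
      with below_min show ?thesis
        by force
    qed (use critical_pw_feasible[OF 2 j] in blast)
  qed
qed

section \<open>The tight case\<close>

text \<open>The right-hand side is the parabola through (0, 0), (k, k) and (2 k, k).\<close>

lemma min_le_quadratic:
  fixes c k :: real
  assumes "0 < k" "0 \<le> c" "c \<le> 2 * k"
  shows "min c k \<le> 3/2 * c - c^2 / (2 * k)"
proof -
  have "2 * k * min c k \<le> 3 * k * c - c^2"
  proof (cases "c \<le> k")
    case True
    then have "c * c \<le> k * c"
      using assms by (simp add: mult_right_mono)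
    with True show ?thesis
      by (simp add: power2_eq_square algebra_simps)
  next
    case False
    then have "0 \<le> (c - k) * (2 * k - c)"
      using assms by simp
    with False show ?thesis
      by (simp add: algebra_simps power2_eq_square)
  qed
  with assms show ?thesis
    by (simp add: field_simps)
qed

lemma pw_feasible_half_expectation_le:
  assumes "1 \<le> k" "n = 2 * k" "pw_feasible n (\<lambda>_. 1/2) \<theta>"
  shows "subset_expectation n \<theta> (\<lambda>S. real (min (card S) k)) \<le> real k - 1/4"
proof -
  have marg: "marg_feasible n (\<lambda>_. 1/2) \<theta>"
    using assms(3) unfolding pw_feasible_def by simp
  then have "\<forall>S\<in>Pow {1..n}. 0 \<le> \<theta> S"
    unfolding marg_feasible_def by simp
  moreover have "real (min (card S) k) \<le> 3/2 * real (card S) - real (card S)^2 / (2 * real k)"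
    if "S \<subseteq> {1..n}" for S
  proof -
    have "card S \<le> n"
      using that card_mono[of "{1..n}" S] by simp
    then show ?thesis
      using min_le_quadratic[of "real k" "real (card S)"] assms(1,2) by simp
  qed
  ultimately have "subset_expectation n \<theta> (\<lambda>S. real (min (card S) k))
      \<le> subset_expectation n \<theta> (\<lambda>S. 3/2 * real (card S) - real (card S)^2 / (2 * real k))"
    by (rule subset_expectation_mono)
  also have "\<dots> = 3/2 * subset_expectation n \<theta> (\<lambda>S. real (card S))
      - subset_expectation n \<theta> (\<lambda>S. real (card S)^2) / (2 * real k)"
    unfolding subset_expectation_def
    by (simp add: right_diff_distrib sum_subtractf sum_distrib_left sum_divide_distrib algebra_simps)
  also have "\<dots> = real k - 1/4"
    unfolding marg_feasible_expected_card[OF marg] pw_feasible_expected_card_sq[OF assms(3)]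
    using assms(1,2) by (simp add: field_simps power2_eq_square)
  finally show ?thesis .
qed

lemma min_card_ratio_le:
  assumes "1 \<le> k" "k \<le> n" "0 \<le> x" "x \<le> 1"
  defines "f \<equiv> \<lambda>S. real (min (card S) k)"
  shows "ratio (concave_closure n f (\<lambda>_. x)) (upper_pw_ext n f (\<lambda>_. x)) \<le> 4 * real k / (4 * real k - 1)"
proof -
  define c where "c = 1 - 1 / (4 * real k)"
  obtain \<theta> where \<theta>: "pw_feasible n (\<lambda>_. x) \<theta>"
    and lower: "c * min (real n * x) (real k) \<le> subset_expectation n \<theta> f"
    using pw_feasible_near_min[OF assms(1-4)] unfolding c_def f_def by auto
  have "concave_closure n f (\<lambda>_. x) \<le> min (real n * x) (real k)"
    using \<theta> expectation_min_card_le[of n "\<lambda>_. x" _ k] unfolding f_def pw_feasible_def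
    by (intro concave_closure_least) auto
  moreover have "c * min (real n * x) (real k) \<le> upper_pw_ext n f (\<lambda>_. x)"
    using lower upper_pw_ext_upper[OF \<theta>, of f] by linarith
  moreover have "0 < c" "c \<le> 1" "0 \<le> min (real n * x) (real k)"
    using assms(1,3) unfolding c_def by (simp_all add: field_simps)
  ultimately have "ratio (concave_closure n f (\<lambda>_. x)) (upper_pw_ext n f (\<lambda>_. x)) \<le> 1 / c"
    using upper_pw_ext_le_concave_closure[OF \<theta>] by (intro ratio_le_inverse) auto
  also have "1 / c = 4 * real k / (4 * real k - 1)"
    using assms(1) unfolding c_def by (simp add: field_simps)
  finally show ?thesis .
qed

lemma min_card_upper_pw_ext_half:
  assumes "1 \<le> k" "n = 2 * k"
  shows "upper_pw_ext n (\<lambda>S. real (min (card S) k)) (\<lambda>_. 1/2) = real k - 1/4"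
proof -
  obtain \<theta> where \<theta>: "pw_feasible n (\<lambda>_. 1/2) \<theta>"
    and lower: "(1 - 1 / (4 * real k)) * real k \<le> subset_expectation n \<theta> (\<lambda>S. real (min (card S) k))"
    using pw_feasible_near_min[of k n "1/2"] assms by auto
  show ?thesis
  proof (rule antisym)
    show "upper_pw_ext n (\<lambda>S. real (min (card S) k)) (\<lambda>_. 1/2) \<le> real k - 1/4"
      using \<theta> pw_feasible_half_expectation_le[OF assms] by (intro upper_pw_ext_least) auto
    show "real k - 1/4 \<le> upper_pw_ext n (\<lambda>S. real (min (card S) k)) (\<lambda>_. 1/2)"
      using lower upper_pw_ext_upper[OF \<theta>, of "\<lambda>S. real (min (card S) k)"] assms(1)
      by (simp add: algebra_simps)
  qed
qed

lemma min_card_concave_closure_half: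
  assumes "1 \<le> k" "n = 2 * k"
  shows "concave_closure n (\<lambda>S. real (min (card S) k)) (\<lambda>_. 1/2) = real k"
proof (rule antisym)
  have "marg_feasible n (\<lambda>_. 1/2) (size_uniform n (\<lambda>m. of_bool (m = k)))"
    using assms by (intro size_uniform_marg_feasible) auto
  then show "concave_closure n (\<lambda>S. real (min (card S) k)) (\<lambda>_. 1/2) \<le> real k"
    using expectation_min_card_le[of n "\<lambda>_. 1/2" _ k] by (intro concave_closure_least) auto
  from concave_closure_upper[OF \<open>marg_feasible _ _ _\<close>, of "\<lambda>S. real (min (card S) k)"]
  show "real k \<le> concave_closure n (\<lambda>S. real (min (card S) k)) (\<lambda>_. 1/2)"
    using size_uniform_expectation[of n "\<lambda>m. of_bool (m = k)" "\<lambda>m. real (min m k)"] assms by simp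
qed

theorem mainTheorem14:
  fixes n k :: nat
  assumes "1 \<le> n" and "1 \<le> k" and "k \<le> n"
  defines "f \<equiv> (\<lambda>S::nat set. real (min (card S) k))"
  shows "(\<forall>x::real\<in>{0..1}.
            ratio (concave_closure n f (\<lambda>_. x)) (upper_pw_ext n f (\<lambda>_. x))
              \<le> 4 * real k / (4 * real k - 1))
       \<and> (even n \<and> k = n div 2 \<longrightarrow>
            ratio (concave_closure n f (\<lambda>_. 1/2)) (upper_pw_ext n f (\<lambda>_. 1/2))
              = 4 * real k / (4 * real k - 1))"
proof (intro conjI ballI impI)
  fix x :: real assume "x \<in> {0..1}"
  then show "ratio (concave_closure n f (\<lambda>_. x)) (upper_pw_ext n f (\<lambda>_. x)) \<le> 4 * real k / (4 * real k - 1)"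
    unfolding f_def using min_card_ratio_le assms(2,3) by simp
next
  assume "even n \<and> k = n div 2"
  then have "n = 2 * k"
    by auto
  then have "concave_closure n f (\<lambda>_. 1/2) = real k" "upper_pw_ext n f (\<lambda>_. 1/2) = real k - 1/4"
    unfolding f_def using min_card_concave_closure_half min_card_upper_pw_ext_half assms(2) by simp_all
  moreover have "ratio (real k) (real k - 1/4) = 4 * real k / (4 * real k - 1)"
    using assms(2) by (simp add: ratio_def field_simps)
  ultimately show "ratio (concave_closure n f (\<lambda>_. 1/2)) (upper_pw_ext n f (\<lambda>_. 1/2))
      = 4 * real k / (4 * real k - 1)"
    by simp
qed

end
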